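(* Let $\alpha,\beta\in\mathbb R$ and $\sigma_w^2>0$ with $\alpha\neq0$ and $\alpha^2\sigma_w^2+\beta^2>1$. Suppose there is an eigenvector $u$ of $\hat A$ with eigenvalue $1$ such that $X^\top u\neq\mathbf 0_{d_0}$. Then, for the linear-ResGCN covariances $\tilde\Sigma^{(L)}$ and metrics defined in the context, $\lim_{L\to\infty}\mathrm{FSP}_L(\sigma_w^2)=\infty$ and $\lim_{L\to\infty}\mathrm{GEV}_L(\sigma_w^2)=0$.
   Context: Let $\mathcal G=(\mathcal V,\mathcal E)$ be a finite undirected graph with $n$ nodes, adjacency matrix $A$, degree matrix $D=\mathrm{diag}(A\mathbf 1_n)$ with degrees $d_i$, $\tilde A=A+I$, $\tilde D=D+I$, $\hat A=\tilde D^{-1/2}\tilde A\tilde D^{-1/2}$, $\hat L=I-\hat A$. For $H\in\mathbb R^{n\times C}$ with rows $h_i$, $\mathrm{Dir}(H)=\mathrm{tr}(H^\top\hat LH)=\sum_{\{i,j\}\in\mathcal E}\|h_i/\sqrt{1+d_i}-h_j/\sqrt{1+d_j}\|^2$. Let $X\in\mathbb R^{n\times d_0}$ be nonzero and $C\ge1$ an integer. The infinite-width (NNGP) covariances of a linear residual GCN ($X^{(0)}=XW^{(0)}$, $H^{(l)}=\hat AX^{(l-1)}W^{(l)}$, $X^{(l)}=\alpha H^{(l)}+\beta X^{(l-1)}$, i.i.d. zero-mean weights of variance $\sigma_w^2/\text{fan-in}$) are defined by $\tilde\Sigma^{(1)}=\frac{\sigma_w^4}{d_0}\hat AXX^\top\hat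 A$ and $\tilde\Sigma^{(l+1)}=\alpha^2\sigma_w^2\hat A\tilde\Sigma^{(l)}\hat A+\beta^2\tilde\Sigma^{(l)}$. With $H\in\mathbb R^{n\times C}$ having i.i.d. columns $N(\mathbf 0_n,\tilde\Sigma^{(L)})$, define $\mathrm{FSP}_L(\sigma_w^2)=\mathbb E[\|H\|_F^2/\|X\|_F^2]$ and $\mathrm{GEV}_L(\sigma_w^2)=\mathbb E[\mathrm{Dir}(H)/\|H\|_F^2]$. *)

theory Defs
  imports "HOL-Analysis.Analysis" "HOL-Probability.Probability"
begin

text \<open>Nodes are indexed by a finite type 'n, input features by 'd (d0 = CARD('d)),
  output channels by 'c (C = CARD('c)). Matrices are real^'col^'row.\<close>

definition is_adjacency :: "real^'n^'n \<Rightarrow> bool" where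
  "is_adjacency A \<longleftrightarrow> (\<forall>i j. A$i$j = 0 \<or> A$i$j = 1) \<and> (\<forall>i j. A$i$j = A$j$i) \<and> (\<forall>i. A$i$i = 0)"

definition degree :: "real^'n^'n \<Rightarrow> 'n \<Rightarrow> real" where
  "degree A i = (\<Sum>j\<in>UNIV. A$i$j)"

definition A_hat :: "real^'n^'n \<Rightarrow> real^'n^'n" where
  "A_hat A = (\<chi> i j. (A$i$j + (if i = j then 1 else 0)) /
                        (sqrt (1 + degree A i) * sqrt (1 + degree A j)))"

definition L_hat :: "real^'n^'n \<Rightarrow> real^'n^'n" where
  "L_hat A = mat 1 - A_hat A"

definition frob_sq :: "real^'b^'a \<Rightarrow> real" where
  "frob_sq M = (\<Sum>i\<in>UNIV. \<Sum>j\<in>UNIV. (M$i$j)\<^sup>2)"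

definition trace_mat :: "real^'n^'n \<Rightarrow> real" where
  "trace_mat M = (\<Sum>i\<in>UNIV. M$i$i)"

definition dirichlet :: "real^'n^'n \<Rightarrow> real^'c^'n \<Rightarrow> real" where
  "dirichlet A H = trace_mat (transpose H ** L_hat A ** H)"

text \<open>NNGP covariances: sigma_cov A X s a b l is \<Sigma>~^(l+1) (shifted index), s = sigma_w^2.\<close>
fun sigma_cov :: "real^'n^'n \<Rightarrow> real^'d^'n \<Rightarrow> real \<Rightarrow> real \<Rightarrow> real \<Rightarrow> nat \<Rightarrow> real^'n^'n" where
  "sigma_cov A X s a b 0 = (s\<^sup>2 / real CARD('d)) *\<^sub>R (A_hat A ** X ** transpose X ** A_hat A)"
| "sigma_cov A X s a b (Suc l) =
     (a\<^sup>2 * s) *\<^sub>R (A_hat A ** sigma_cov A X s a b l ** A_hat A) + b\<^sup>2 *\<^sub>R sigma_cov A X s a b l"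

definition Sigma_L :: "real^'n^'n \<Rightarrow> real^'d^'n \<Rightarrow> real \<Rightarrow> real \<Rightarrow> real \<Rightarrow> nat \<Rightarrow> real^'n^'n" where
  "Sigma_L A X s a b L = sigma_cov A X s a b (L - 1)"

definition std_gauss_mat :: "(('n \<times> 'c) \<Rightarrow> real) measure" where
  "std_gauss_mat = PiM UNIV (\<lambda>_. density lborel (\<lambda>x. ennreal (std_normal_density x)))"

definition to_mat :: "(('n \<times> 'c) \<Rightarrow> real) \<Rightarrow> real^'c^'n" where
  "to_mat z = (\<chi> i j. z (i, j))"

text \<open>H has i.i.d. columns N(0, S): H = G Z with G G^T = S and Z standard Gaussian
  (any such factor G gives the same law). The expectation of f(H):\<close>
definition gauss_expect :: "real^'n^'n \<Rightarrow> (real^'c^'n \<Rightarrow> real) \<Rightarrow> real" where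
  "gauss_expect S f =
     (let G = (SOME G :: real^'n^'n. G ** transpose G = S)
      in integral\<^sup>L std_gauss_mat (\<lambda>z. f (G ** to_mat z)))"

definition FSP :: "real^'n^'n \<Rightarrow> real^'d^'n \<Rightarrow> real \<Rightarrow> real \<Rightarrow> real \<Rightarrow> 'c::finite itself \<Rightarrow> nat \<Rightarrow> real" where
  "FSP A X s a b _ L = gauss_expect (Sigma_L A X s a b L) (\<lambda>H::real^'c^'n. frob_sq H / frob_sq X)"

definition GEV :: "real^'n^'n \<Rightarrow> real^'d^'n \<Rightarrow> real \<Rightarrow> real \<Rightarrow> real \<Rightarrow> 'c::finite itself \<Rightarrow> nat \<Rightarrow> real" where
  "GEV A X s a b _ L = gauss_expect (Sigma_L A X s a b L) (\<lambda>H::real^'c^'n. dirichlet A H / frob_sq H)"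

end

theory Submission
  imports Defs
begin

text \<open>The recursion \<open>\<Sigma> \<mapsto> \<alpha>\<^sup>2\<sigma>\<^sub>w\<^sup>2 A_hat \<Sigma> A_hat + \<beta>\<^sup>2 \<Sigma>\<close> multiplies the quadratic form of \<open>\<Sigma>\<close> at a
  fixed vector \<open>v\<close> of \<open>A_hat\<close> by \<open>\<rho> = \<alpha>\<^sup>2\<sigma>\<^sub>w\<^sup>2 + \<beta>\<^sup>2 > 1\<close>, so the trace of \<open>\<Sigma>\<close>, which is the expected
  squared norm of \<open>H\<close>, grows like \<open>\<rho>\<^sup>L\<close>.
  The spectrum of \<open>A_hat\<close> lies in \<open>(-1, 1]\<close>, so \<open>A_hat\<close> contracts by some \<open>\<theta> < 1\<close> on the orthogonal
  complement of its fixed vectors, and the part of \<open>\<Sigma>\<close> living there grows at most like \<open>\<gamma>\<^sup>L\<close> with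
  \<open>\<gamma> = \<alpha>\<^sup>2\<sigma>\<^sub>w\<^sup>2\<theta>\<^sup>2 + \<beta>\<^sup>2 < \<rho>\<close>. The Dirichlet energy only sees this part, while the component of a
  column of \<open>H\<close> along \<open>v\<close> is Gaussian with variance of order \<open>\<rho>\<^sup>L\<close> and hence rarely small
  compared to \<open>\<rho>\<^sup>L\<close>; so \<open>Dir(H)/\<parallel>H\<parallel>\<^sup>2\<close> tends to \<open>0\<close> in expectation.\<close>

section \<open>Frobenius norm and Gram matrices\<close>

lemma inner_matrix_vector_transpose:
  fixes M :: "real^'m^'n"
  shows "x \<bullet> (M *v y) = (transpose M *v x) \<bullet> y"
  by (simp add: dot_lmul_matrix)

lemma inner_symmetric_matrix_vector:
  fixes M :: "real^'n^'n"
  assumes "transpose M = M"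
  shows "x \<bullet> (M *v y) = (M *v x) \<bullet> y"
  by (metis assms inner_matrix_vector_transpose)

lemma column_matrix_mult: "column j (M ** N) = M *v column j N"
  by (simp add: vec_eq_iff column_def matrix_matrix_mult_def matrix_vector_mult_def)

lemma frob_sq_rows: "frob_sq M = (\<Sum>i\<in>UNIV. M $ i \<bullet> M $ i)"
  unfolding frob_sq_def by (simp add: inner_vec_def power2_eq_square)

lemma frob_sq_columns: "frob_sq M = (\<Sum>j\<in>UNIV. column j M \<bullet> column j M)"
proof -
  have "frob_sq M = (\<Sum>j\<in>UNIV. \<Sum>i\<in>UNIV. (M $ i $ j)\<^sup>2)"
    unfolding frob_sq_def by (rule sum.swap)
  then show ?thesis
    by (simp add: inner_vec_def power2_eq_square column_def)
qed

lemma frob_sq_nonneg: "0 \<le> frob_sq M"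
  unfolding frob_sq_def by (simp add: sum_nonneg)

lemma frob_sq_pos:
  assumes "M \<noteq> 0"
  shows "0 < frob_sq M"
proof -
  obtain i where "M $ i \<noteq> 0"
    using assms by (auto simp: vec_eq_iff)
  then have "0 < M $ i \<bullet> M $ i"
    by simp
  also have "\<dots> \<le> frob_sq M"
    unfolding frob_sq_rows by (rule member_le_sum) auto
  finally show ?thesis .
qed

lemma trace_mat_gram: "trace_mat (G ** transpose G) = frob_sq G"
  by (simp add: trace_mat_def matrix_mult_transpose_dot_row frob_sq_rows row_def)

lemma inner_unit_square_le:
  fixes v :: "'a::real_inner"
  assumes "norm v = 1"
  shows "(v \<bullet> x)\<^sup>2 \<le> x \<bullet> x"
  using Cauchy_Schwarz_ineq[of v x] assms by (simp add: dot_square_norm)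

lemma inner_column_square_le_frob_sq:
  assumes "norm v = 1"
  shows "(v \<bullet> column k M)\<^sup>2 \<le> frob_sq M"
proof -
  have "(v \<bullet> column k M)\<^sup>2 \<le> column k M \<bullet> column k M"
    using assms by (rule inner_unit_square_le)
  also have "\<dots> \<le> frob_sq M"
    unfolding frob_sq_columns by (rule member_le_sum) auto
  finally show ?thesis .
qed

lemma quadratic_gram:
  fixes G :: "real^'m^'n"
  shows "v \<bullet> ((G ** transpose G) *v v) = (transpose G *v v) \<bullet> (transpose G *v v)"
  unfolding matrix_vector_mul_assoc[symmetric] by (rule inner_matrix_vector_transpose)

lemma quadratic_gram_le_frob_sq:
  fixes G :: "real^'m^'n"
  assumes "norm v = 1"
  shows "v \<bullet> ((G ** transpose G) *v v) \<le> frob_sq G"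
proof -
  have "v \<bullet> ((G ** transpose G) *v v) = (\<Sum>j\<in>UNIV. (v \<bullet> column j G)\<^sup>2)"
    unfolding quadratic_gram
    by (simp add: inner_vec_def power2_eq_square column_def vector_matrix_mult_def mult.commute)
  also have "\<dots> \<le> (\<Sum>j\<in>UNIV. column j G \<bullet> column j G)"
    using inner_unit_square_le[OF assms] by (intro sum_mono)
  finally show ?thesis by (simp add: frob_sq_columns)
qed

section \<open>The normalized adjacency matrix\<close>

definition A_tilde :: "real^'n^'n \<Rightarrow> real^'n^'n" where
  "A_tilde A = A + mat 1"

lemma A_hat_entry:
  "A_hat A $ i $ j = A_tilde A $ i $ j / (sqrt (1 + degree A i) * sqrt (1 + degree A j))"
  by (simp add: A_hat_def A_tilde_def mat_def)

lemma A_tilde_row_sum: "(\<Sum>j\<in>UNIV. A_tilde A $ i $ j) = 1 + degree A i"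
  by (simp add: A_tilde_def mat_def degree_def sum.distrib)

lemma adjacency_nonneg: "is_adjacency A \<Longrightarrow> 0 \<le> A $ i $ j"
  unfolding is_adjacency_def by (metis order_refl zero_le_one)

lemma adjacency_symmetric: "is_adjacency A \<Longrightarrow> A $ i $ j = A $ j $ i"
  unfolding is_adjacency_def by metis

lemma adjacency_diagonal: "is_adjacency A \<Longrightarrow> A $ i $ i = 0"
  unfolding is_adjacency_def by metis

lemma
  assumes "is_adjacency A"
  shows A_tilde_nonneg: "0 \<le> A_tilde A $ i $ j"
    and A_tilde_symmetric: "A_tilde A $ i $ j = A_tilde A $ j $ i"
    and A_tilde_diagonal: "A_tilde A $ i $ i = 1"
  using adjacency_nonneg[OF assms, of i j] adjacency_symmetric[OF assms, of i j]
    adjacency_diagonal[OF assms, of i]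
  by (auto simp: A_tilde_def mat_def)

lemma degree_nonneg: "is_adjacency A \<Longrightarrow> 0 \<le> degree A i"
  unfolding degree_def by (intro sum_nonneg adjacency_nonneg)

lemma symmetric_A_hat: "is_adjacency A \<Longrightarrow> transpose (A_hat A) = A_hat A"
  by (simp add: vec_eq_iff transpose_def A_hat_entry A_tilde_symmetric mult.commute)

text \<open>The sign \<open>\<sigma> = \<plusminus>1\<close> treats the quadratic forms of \<open>I + A_hat A\<close> and
  \<open>I - A_hat A\<close> at once.\<close>
lemma A_hat_quadratic_form:
  fixes x :: "real^'n"
  assumes adj: "is_adjacency A" and \<sigma>: "\<sigma>\<^sup>2 = 1"
  defines "y \<equiv> \<lambda>i. x $ i / sqrt (1 + degree A i)"
  shows "x \<bullet> x + \<sigma> * (x \<bullet> (A_hat A *v x))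
    = (\<Sum>i\<in>UNIV. \<Sum>j\<in>UNIV. A_tilde A $ i $ j * (y i + \<sigma> * y j)\<^sup>2) / 2"
proof -
  let ?T = "A_tilde A"
  have y_sq: "(y i)\<^sup>2 * (1 + degree A i) = (x $ i)\<^sup>2" for i
    using degree_nonneg[OF adj, of i] by (simp add: y_def power_divide)
  have "(\<Sum>i\<in>UNIV. \<Sum>j\<in>UNIV. ?T $ i $ j * (y i)\<^sup>2) = (\<Sum>i\<in>UNIV. (y i)\<^sup>2 * (1 + degree A i))"
    by (simp add: sum_distrib_right[symmetric] A_tilde_row_sum mult.commute)
  also have "\<dots> = x \<bullet> x"
    by (simp only: y_sq) (simp add: inner_vec_def power2_eq_square)
  finally have rows: "(\<Sum>i\<in>UNIV. \<Sum>j\<in>UNIV. ?T $ i $ j * (y i)\<^sup>2) = x \<bullet> x" .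
  have "(\<Sum>i\<in>UNIV. \<Sum>j\<in>UNIV. ?T $ i $ j * (y j)\<^sup>2) = (\<Sum>j\<in>UNIV. \<Sum>i\<in>UNIV. ?T $ i $ j * (y j)\<^sup>2)"
    by (rule sum.swap)
  also have "\<dots> = x \<bullet> x"
    unfolding rows[symmetric] using A_tilde_symmetric[OF adj] by presburger
  finally have cols: "(\<Sum>i\<in>UNIV. \<Sum>j\<in>UNIV. ?T $ i $ j * (y j)\<^sup>2) = x \<bullet> x" .
  have "x \<bullet> (A_hat A *v x) = (\<Sum>i\<in>UNIV. \<Sum>j\<in>UNIV. x $ i * A_hat A $ i $ j * x $ j)"
    by (simp add: inner_vec_def matrix_vector_mult_def sum_distrib_left mult.assoc)
  also have "\<dots> = (\<Sum>i\<in>UNIV. \<Sum>j\<in>UNIV. ?T $ i $ j * (y i * y j))"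
    by (intro sum.cong refl) (simp add: A_hat_entry y_def)
  finally have cross: "(\<Sum>i\<in>UNIV. \<Sum>j\<in>UNIV. ?T $ i $ j * (y i * y j)) = x \<bullet> (A_hat A *v x)" ..
  have "?T $ i $ j * (y i + \<sigma> * y j)\<^sup>2
      = ?T $ i $ j * (y i)\<^sup>2 + 2 * \<sigma> * (?T $ i $ j * (y i * y j)) + ?T $ i $ j * (y j)\<^sup>2" for i j
    using \<sigma> by (simp add: power2_sum algebra_simps)
  then have "(\<Sum>i\<in>UNIV. \<Sum>j\<in>UNIV. ?T $ i $ j * (y i + \<sigma> * y j)\<^sup>2)
      = (\<Sum>i\<in>UNIV. \<Sum>j\<in>UNIV. ?T $ i $ j * (y i)\<^sup>2) + 2 * \<sigma> * (\<Sum>i\<in>UNIV. \<Sum>j\<in>UNIV. ?T $ i $ j * (y i * y j))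
        + (\<Sum>i\<in>UNIV. \<Sum>j\<in>UNIV. ?T $ i $ j * (y j)\<^sup>2)"
    by (simp add: sum.distrib sum_distrib_left)
  then show ?thesis
    using rows cols cross by simp
qed

lemma A_hat_quadratic_le:
  assumes "is_adjacency A"
  shows "x \<bullet> (A_hat A *v x) \<le> x \<bullet> x"
proof -
  have minus_one: "(- 1 :: real)\<^sup>2 = 1"
    by simp
  have "0 \<le> x \<bullet> x + (- 1) * (x \<bullet> (A_hat A *v x))"
    unfolding A_hat_quadratic_form[OF assms minus_one]
    using A_tilde_nonneg[OF assms] by (intro divide_nonneg_nonneg sum_nonneg) auto
  then show ?thesis
    by simp
qed

lemma A_hat_quadratic_gt:
  assumes adj: "is_adjacency A" and "x \<noteq> 0"
  shows "- (x \<bullet> x) < x \<bullet> (A_hat A *v x)"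
proof -
  define y where "y i = x $ i / sqrt (1 + degree A i)" for i
  define f where "f i j = A_tilde A $ i $ j * (y i + 1 * y j)\<^sup>2" for i j
  obtain i where "x $ i \<noteq> 0"
    using \<open>x \<noteq> 0\<close> by (auto simp: vec_eq_iff)
  then have "0 < f i i"
    using degree_nonneg[OF adj, of i] by (simp add: f_def y_def A_tilde_diagonal[OF adj])
  also have "f i i \<le> (\<Sum>j\<in>UNIV. f i j)"
    using A_tilde_nonneg[OF adj] by (intro member_le_sum) (auto simp: f_def)
  also have "\<dots> \<le> (\<Sum>i\<in>UNIV. \<Sum>j\<in>UNIV. f i j)"
    using A_tilde_nonneg[OF adj] by (intro member_le_sum sum_nonneg) (auto simp: f_def)
  finally show ?thesis
    using A_hat_quadratic_form[OF adj, of 1 x] unfolding f_def y_def by simp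
qed

lemma norm_matrix_vector_le_if_quadratic_bounded:
  fixes M :: "real^'n^'n"
  assumes sym: "transpose M = M" and quad: "\<And>x. \<bar>x \<bullet> (M *v x)\<bar> \<le> x \<bullet> x"
  shows "norm (M *v x) \<le> norm x"
proof -
  define y where "y = M *v x"
  have "(x + y) \<bullet> (M *v (x + y)) - (x - y) \<bullet> (M *v (x - y)) = 4 * (y \<bullet> y)"
    using inner_symmetric_matrix_vector[OF sym, of y x]
    by (simp add: y_def matrix_vector_right_distrib matrix_vector_mult_diff_distrib
        inner_add_left inner_add_right inner_diff_left inner_diff_right inner_commute)
  moreover have "(x + y) \<bullet> (M *v (x + y)) - (x - y) \<bullet> (M *v (x - y))
      \<le> (x + y) \<bullet> (x + y) + (x - y) \<bullet> (x - y)"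
    using quad[of "x + y"] quad[of "x - y"] by linarith
  moreover have "(x + y) \<bullet> (x + y) + (x - y) \<bullet> (x - y) = 2 * (x \<bullet> x) + 2 * (y \<bullet> y)"
    by (simp add: inner_add_left inner_add_right inner_diff_left inner_diff_right inner_commute)
  ultimately have "y \<bullet> y \<le> x \<bullet> x"
    by linarith
  then show ?thesis
    by (simp add: y_def norm_eq_sqrt_inner)
qed

lemma
  assumes "is_adjacency A"
  shows norm_A_hat_le: "norm (A_hat A *v x) \<le> norm x"
    and A_hat_neq_uminus: "x \<noteq> 0 \<Longrightarrow> A_hat A *v x \<noteq> - x"
proof -
  have "\<bar>x \<bullet> (A_hat A *v x)\<bar> \<le> x \<bullet> x" for x
    using A_hat_quadratic_le[OF assms, of x] A_hat_quadratic_gt[OF assms, of x]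
    by (cases "x = 0") auto
  then show "norm (A_hat A *v x) \<le> norm x"
    by (rule norm_matrix_vector_le_if_quadratic_bounded[OF symmetric_A_hat[OF assms]])
  show "A_hat A *v x \<noteq> - x" if "x \<noteq> 0"
    using A_hat_quadratic_gt[OF assms that] by auto
qed

section \<open>Spectral gap and Dirichlet energy\<close>

definition fixed_space :: "real^'n^'n \<Rightarrow> (real^'n) set" where
  "fixed_space M = {x. M *v x = x}"

lemma subspace_fixed_space: "subspace (fixed_space M)"
  unfolding subspace_def fixed_space_def
  by (simp add: matrix_vector_right_distrib matrix_vector_mult_scaleR)

lemma closed_orthogonal_comp:
  fixes U :: "'a::real_inner set"
  shows "closed (U\<^sup>\<bottom>)"
proof -
  have "U\<^sup>\<bottom> = (\<Inter>u\<in>U. {x. u \<bullet> x = 0})"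
    by (auto simp: orthogonal_comp_def orthogonal_def)
  then show ?thesis
    by (auto intro: closed_hyperplane)
qed

lemma symmetric_matrix_orthogonal_comp_fixed_space:
  fixes M :: "real^'n^'n"
  assumes "transpose M = M" and "x \<in> (fixed_space M)\<^sup>\<bottom>"
  shows "M *v x \<in> (fixed_space M)\<^sup>\<bottom>"
  unfolding orthogonal_comp_def orthogonal_def
proof (intro CollectI ballI)
  fix e assume "e \<in> fixed_space M"
  then have "e \<bullet> (M *v x) = e \<bullet> x"
    by (simp add: inner_symmetric_matrix_vector[OF assms(1)] fixed_space_def)
  also have "\<dots> = 0"
    using \<open>e \<in> fixed_space M\<close> assms(2) by (simp add: orthogonal_comp_def orthogonal_def)
  finally show "e \<bullet> (M *v x) = 0" .
qed

lemma symmetric_nonexpansive_norm_eq: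
  fixes M :: "real^'n^'n"
  assumes sym: "transpose M = M" and nonexp: "\<And>x. norm (M *v x) \<le> norm x"
    and eq: "norm (M *v x) = norm x"
  shows "M *v (M *v x) = x"
proof -
  let ?z = "M *v (M *v x)"
  have "x \<bullet> ?z = x \<bullet> x"
    using inner_symmetric_matrix_vector[OF sym, of x "M *v x"] eq by (simp add: dot_square_norm)
  moreover have "?z \<bullet> ?z \<le> x \<bullet> x"
    using nonexp[of "M *v x"] eq by (simp add: dot_square_norm power_mono)
  moreover have "(x - ?z) \<bullet> (x - ?z) = x \<bullet> x - 2 * (x \<bullet> ?z) + ?z \<bullet> ?z"
    by (simp add: inner_diff_left inner_diff_right inner_commute)
  ultimately have "\<not> 0 < (x - ?z) \<bullet> (x - ?z)"
    by linarith
  then show ?thesis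
    by simp
qed

text \<open>A symmetric contraction without eigenvalue \<open>-1\<close> contracts strictly on the orthogonal
  complement of its fixed vectors: by compactness the norm of \<open>M x\<close> attains its maximum on the unit
  sphere of that complement, and a maximiser \<open>x\<close> with \<open>\<parallel>M x\<parallel> = 1\<close> would make \<open>M x + x\<close> a fixed vector
  orthogonal to all fixed vectors, i.e. \<open>M x = -x\<close>.\<close>
lemma spectral_gap_orthogonal_comp_fixed_space:
  fixes M :: "real^'n^'n"
  assumes sym: "transpose M = M" and nonexp: "\<And>x. norm (M *v x) \<le> norm x"
    and no_minus_one: "\<And>x. x \<noteq> 0 \<Longrightarrow> M *v x \<noteq> - x"
  obtains \<theta> where "0 \<le> \<theta>" "\<theta> < 1" "\<And>x. x \<in> (fixed_space M)\<^sup>\<bottom> \<Longrightarrow> norm (M *v x) \<le> \<theta> * norm x"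
proof -
  let ?P = "(fixed_space M)\<^sup>\<bottom>"
  define S where "S = sphere 0 1 \<inter> ?P"
  have scale: "norm (M *v x) \<le> \<theta> * norm x"
    if "x \<in> ?P" and bound: "\<And>y. y \<in> S \<Longrightarrow> norm (M *v y) \<le> \<theta>" for x \<theta>
  proof (cases "x = 0")
    case False
    have "(1 / norm x) *\<^sub>R x \<in> S"
      using \<open>x \<in> ?P\<close> False subspace_orthogonal_comp
      by (auto simp: S_def intro: subspace_scale)
    then have "norm (M *v ((1 / norm x) *\<^sub>R x)) \<le> \<theta>"
      by (rule bound)
    then have "norm (M *v x) / norm x \<le> \<theta>"
      by (simp add: matrix_vector_mult_scaleR)
    then show ?thesis
      using False by (simp add: divide_le_eq mult.commute)
  qed simp
  show thesis
  proof (cases "S = {}")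
    case True
    then show thesis
      using that[of 0] scale[of _ 0] by auto
  next
    case False
    have "compact S"
      unfolding S_def by (intro compact_Int_closed compact_sphere closed_orthogonal_comp)
    moreover have "continuous_on S (\<lambda>x. norm (M *v x))"
      by (intro continuous_on_norm linear_continuous_on matrix_vector_mul_bounded_linear)
    ultimately obtain x where x: "x \<in> S" and max: "\<And>y. y \<in> S \<Longrightarrow> norm (M *v y) \<le> norm (M *v x)"
      using continuous_attains_sup[OF _ False] by blast
    have "norm (M *v x) < 1"
    proof (rule ccontr)
      assume "\<not> norm (M *v x) < 1"
      then have "norm (M *v x) = norm x"
        using x nonexp[of x] by (simp add: S_def)
      then have "M *v (M *v x + x) = M *v x + x"
        using symmetric_nonexpansive_norm_eq[OF sym nonexp] by (simp add: matrix_vector_right_distrib)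
      moreover have "M *v x + x \<in> ?P"
        using x symmetric_matrix_orthogonal_comp_fixed_space[OF sym] subspace_orthogonal_comp
        by (auto simp: S_def intro: subspace_add)
      ultimately have "M *v x + x = 0"
        using orthogonal_Int_0[OF subspace_fixed_space] by (auto simp: fixed_space_def)
      then have "M *v x = - x"
        by (simp add: add_eq_0_iff2)
      moreover have "x \<noteq> 0"
        using x by (auto simp: S_def)
      ultimately show False
        using no_minus_one by blast
    qed
    then show thesis
      using that[of "norm (M *v x)"] scale max by auto
  qed
qed

lemma orthogonal_projection_matrix_exists:
  fixes U :: "(real^'n) set"
  assumes "subspace U"
  obtains K :: "real^'n^'n" where "\<And>x. K *v x \<in> U\<^sup>\<bottom>" and "\<And>x. x - K *v x \<in> U"
proof -
  obtain B where "B \<subseteq> U" and orth: "pairwise orthogonal B" and unit: "\<And>b. b \<in> B \<Longrightarrow> norm b = 1"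
    and "independent B" and span_B: "span B = U"
    using orthonormal_basis_subspace[OF assms] by metis
  then have "finite B"
    by (simp add: independent_imp_finite)
  have orthonormal: "b \<bullet> b' = (if b = b' then 1 else 0)" if "b \<in> B" "b' \<in> B" for b b'
    using that orth unit norm_eq_1 by (auto simp: orthogonal_def pairwise_def)
  define P :: "real^'n^'n" where "P = (\<chi> i j. \<Sum>b\<in>B. b $ i * b $ j)"
  define K where "K = mat 1 - P"
  have "(P *v x) $ i = (\<Sum>b\<in>B. (b \<bullet> x) *\<^sub>R b) $ i" for x i
  proof -
    have "(P *v x) $ i = (\<Sum>j\<in>UNIV. \<Sum>b\<in>B. b $ i * b $ j * x $ j)"
      by (simp add: P_def matrix_vector_mult_def sum_distrib_right)
    also have "\<dots> = (\<Sum>b\<in>B. \<Sum>j\<in>UNIV. b $ i * b $ j * x $ j)"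
      by (rule sum.swap)
    also have "\<dots> = (\<Sum>b\<in>B. (b \<bullet> x) *\<^sub>R b) $ i"
      by (simp add: inner_vec_def sum_distrib_left sum_distrib_right mult_ac)
    finally show ?thesis .
  qed
  then have K: "K *v x = x - (\<Sum>b\<in>B. (b \<bullet> x) *\<^sub>R b)" for x
    by (simp add: K_def vec_eq_iff matrix_vector_mult_diff_rdistrib)
  show thesis
  proof
    show "x - K *v x \<in> U" for x
    proof -
      have "(\<Sum>b\<in>B. (b \<bullet> x) *\<^sub>R b) \<in> span B"
        by (intro span_sum span_scale span_base) auto
      then show ?thesis
        using span_B by (simp add: K)
    qed
    show "K *v x \<in> U\<^sup>\<bottom>" for x
      unfolding orthogonal_comp_def orthogonal_def mem_Collect_eq
    proof
      fix y assume "y \<in> U"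
      then obtain c where y: "y = (\<Sum>b\<in>B. c b *\<^sub>R b)"
        using span_B span_finite[OF \<open>finite B\<close>] by auto
      have "b \<bullet> (K *v x) = 0" if "b \<in> B" for b
        using that \<open>finite B\<close>
        by (simp add: K orthonormal inner_diff_right inner_sum_right if_distrib inner_commute
            cong: if_cong)
      then show "y \<bullet> (K *v x) = 0"
        by (simp add: y inner_sum_left)
    qed
  qed
qed

lemma orthogonal_projection_fixed_space_commute:
  fixes M K :: "real^'n^'n"
  assumes sym: "transpose M = M"
    and perp_K: "\<And>x. K *v x \<in> (fixed_space M)\<^sup>\<bottom>" and fixed_diff_K: "\<And>x. x - K *v x \<in> fixed_space M"
  shows "K ** M = M ** K"
proof -
  have zero: "w = 0" if "w \<in> fixed_space M" "w \<in> (fixed_space M)\<^sup>\<bottom>" for w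
    using that orthogonal_Int_0[OF subspace_fixed_space] by blast
  have fixed: "K *v y = 0" if "y \<in> fixed_space M" for y
  proof (rule zero)
    show "K *v y \<in> fixed_space M"
      using subspace_diff[OF subspace_fixed_space that fixed_diff_K[of y]] by simp
  qed (rule perp_K)
  have perp: "K *v z = z" if "z \<in> (fixed_space M)\<^sup>\<bottom>" for z
  proof -
    have "z - K *v z = 0"
      using zero fixed_diff_K subspace_diff[OF subspace_orthogonal_comp that perp_K] by blast
    then show ?thesis
      by simp
  qed
  have "K *v (M *v x) = M *v (K *v x)" for x
  proof -
    have "M *v x = (x - K *v x) + M *v (K *v x)"
      using fixed_diff_K[of x] by (simp add: fixed_space_def matrix_vector_mult_diff_distrib diff_eq_eq)
    then show ?thesis
      using fixed[OF fixed_diff_K] perp[OF symmetric_matrix_orthogonal_comp_fixed_space[OF sym perp_K]]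
      by (simp add: matrix_vector_right_distrib)
  qed
  then show ?thesis
    by (simp add: matrix_eq matrix_vector_mul_assoc[symmetric])
qed

lemma L_hat_apply: "L_hat A *v x = x - A_hat A *v x"
  by (simp add: L_hat_def matrix_vector_mult_diff_rdistrib)

lemma symmetric_L_hat:
  assumes "is_adjacency A"
  shows "transpose (L_hat A) = L_hat A"
  using symmetric_A_hat[OF assms] by (simp add: L_hat_def vec_eq_iff transpose_def mat_def)

lemma
  assumes "is_adjacency A"
  shows L_hat_quadratic_nonneg: "0 \<le> x \<bullet> (L_hat A *v x)"
    and L_hat_quadratic_le: "x \<bullet> (L_hat A *v x) \<le> 2 * (x \<bullet> x)"
  using A_hat_quadratic_le[OF assms, of x] A_hat_quadratic_gt[OF assms, of x]
  by (cases "x = 0"; simp add: L_hat_apply inner_diff_right)+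

lemma L_hat_quadratic_projection:
  assumes adj: "is_adjacency A" and fixed_diff_K: "x - K *v x \<in> fixed_space (A_hat A)"
  shows "x \<bullet> (L_hat A *v x) = (K *v x) \<bullet> (L_hat A *v (K *v x))"
proof -
  define y where "y = x - K *v x"
  have Ly: "L_hat A *v y = 0"
    using fixed_diff_K by (simp add: y_def L_hat_apply fixed_space_def)
  have x: "x = K *v x + y"
    by (simp add: y_def)
  have "L_hat A *v x = L_hat A *v (K *v x)"
    by (subst x) (simp add: matrix_vector_right_distrib Ly)
  then have "x \<bullet> (L_hat A *v x) = (K *v x + y) \<bullet> (L_hat A *v (K *v x))"
    using x by metis
  also have "\<dots> = (K *v x) \<bullet> (L_hat A *v (K *v x))"
    using inner_symmetric_matrix_vector[OF symmetric_L_hat[OF adj], of y "K *v x"]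
    by (simp add: Ly inner_add_left)
  finally show ?thesis .
qed

lemma dirichlet_columns: "dirichlet A H = (\<Sum>k\<in>UNIV. column k H \<bullet> (L_hat A *v column k H))"
proof -
  have "dirichlet A H = (\<Sum>k\<in>UNIV. \<Sum>i\<in>UNIV. \<Sum>j\<in>UNIV. H $ j $ k * L_hat A $ j $ i * H $ i $ k)"
    by (simp add: dirichlet_def trace_mat_def matrix_matrix_mult_def transpose_def sum_distrib_right)
  also have "\<dots> = (\<Sum>k\<in>UNIV. \<Sum>j\<in>UNIV. \<Sum>i\<in>UNIV. H $ j $ k * L_hat A $ j $ i * H $ i $ k)"
    by (intro sum.cong refl sum.swap)
  also have "\<dots> = (\<Sum>k\<in>UNIV. column k H \<bullet> (L_hat A *v column k H))"
    by (simp add: inner_vec_def matrix_vector_mult_def column_def sum_distrib_left mult.assoc)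
  finally show ?thesis .
qed

lemma
  assumes "is_adjacency A"
  shows dirichlet_nonneg: "0 \<le> dirichlet A H"
    and dirichlet_le_frob_sq: "dirichlet A H \<le> 2 * frob_sq H"
  using L_hat_quadratic_nonneg[OF assms] L_hat_quadratic_le[OF assms]
  by (auto simp: dirichlet_columns frob_sq_columns sum_distrib_left intro: sum_nonneg sum_mono)

lemma dirichlet_le_projection:
  assumes adj: "is_adjacency A" and fixed_diff_K: "\<And>x. x - K *v x \<in> fixed_space (A_hat A)"
  shows "dirichlet A H \<le> 2 * frob_sq (K ** H)"
  unfolding dirichlet_columns frob_sq_columns sum_distrib_left column_matrix_mult
  using L_hat_quadratic_le[OF adj] L_hat_quadratic_projection[OF adj fixed_diff_K]
  by (intro sum_mono) metis

section \<open>Growth of the covariances\<close>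

text \<open>Square factors, since these are what \<open>gauss_expect\<close> samples with.\<close>
definition is_gram :: "real^'n^'n \<Rightarrow> bool" where
  "is_gram S \<longleftrightarrow> (\<exists>G::real^'n^'n. G ** transpose G = S)"

lemma inner_orthonormal_expansion:
  fixes B :: "'a::euclidean_space set"
  assumes "finite B" and orth: "pairwise orthogonal B" and unit: "\<And>b. b \<in> B \<Longrightarrow> norm b = 1"
    and "x \<in> span B"
  shows "x \<bullet> y = (\<Sum>b\<in>B. (b \<bullet> x) * (b \<bullet> y))"
proof -
  have orthonormal: "b \<bullet> b' = (if b = b' then 1 else 0)" if "b \<in> B" "b' \<in> B" for b b'
    using that orth unit norm_eq_1 by (auto simp: orthogonal_def pairwise_def)
  obtain c where x: "x = (\<Sum>b\<in>B. c b *\<^sub>R b)"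
    using \<open>x \<in> span B\<close> span_finite[OF \<open>finite B\<close>] by auto
  have "b \<bullet> x = c b" if "b \<in> B" for b
    using that \<open>finite B\<close> by (simp add: x inner_sum_right orthonormal if_distrib cong: if_cong)
  then show ?thesis
    by (simp add: x inner_sum_left)
qed

text \<open>The Gram matrix of \<open>F\<close> only depends on the inner products of the rows of \<open>F\<close>; these span a
  space of dimension at most \<open>CARD('n)\<close>, and their coordinates in an orthonormal basis of it give a
  square factor.\<close>
lemma is_gram_gram:
  fixes F :: "real^'m^'n"
  shows "is_gram (F ** transpose F)"
proof -
  obtain B where "B \<subseteq> span (range (($) F))" and orth: "pairwise orthogonal B"
    and unit: "\<And>b. b \<in> B \<Longrightarrow> norm b = 1" and "independent B"
    and card_B: "card B = dim (span (range (($) F)))" and span_B: "span B = span (range (($) F))"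
    using orthonormal_basis_subspace[OF subspace_span] by metis
  have "finite B"
    using \<open>independent B\<close> by (rule independent_imp_finite)
  have "card B \<le> card (range (($) F))"
    unfolding card_B dim_span by (rule dim_le_card) (auto intro: span_base)
  also have "\<dots> \<le> CARD('n)"
    by (rule card_image_le) simp
  finally obtain e :: "real^'m \<Rightarrow> 'n" where "inj_on e B"
    using card_le_inj[OF \<open>finite B\<close> Finite_Set.finite_UNIV] by auto
  have rows: "F $ k \<in> span B" for k
    unfolding span_B by (rule span_base) (rule rangeI)
  define G :: "real^'n^'n" where "G = (\<chi> i. \<Sum>b\<in>B. (b \<bullet> F $ i) *\<^sub>R axis (e b) 1)"
  have "G $ i \<bullet> G $ j = F $ i \<bullet> F $ j" for i j
  proof -
    have "G $ i \<bullet> G $ j = (\<Sum>b\<in>B. \<Sum>b'\<in>B. (b \<bullet> F $ i) * (b' \<bullet> F $ j) * (if b = b' then 1 else 0))"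
      unfolding G_def vec_lambda_beta inner_sum_left inner_sum_right
      using \<open>inj_on e B\<close> by (intro sum.cong refl) (auto simp: inner_axis_axis inj_on_eq_iff)
    also have "\<dots> = (\<Sum>b\<in>B. (b \<bullet> F $ i) * (b \<bullet> F $ j))"
      using \<open>finite B\<close> by (simp add: if_distrib cong: if_cong)
    also have "\<dots> = F $ i \<bullet> F $ j"
      using inner_orthonormal_expansion[OF \<open>finite B\<close> orth unit rows] by simp
    finally show ?thesis .
  qed
  then have "G ** transpose G = F ** transpose F"
    by (simp add: matrix_mult_transpose_dot_row row_def)
  then show ?thesis
    unfolding is_gram_def by blast
qed

lemma is_gram_add:
  fixes S T :: "real^'n^'n"
  assumes "is_gram S" and "is_gram T"
  shows "is_gram (S + T)"
proof -
  obtain G H :: "real^'n^'n" where S: "S = G ** transpose G" and T: "T = H ** transpose H"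
    using assms unfolding is_gram_def by metis
  define F :: "real^('n + 'n)^'n" where "F = (\<chi> i k. case k of Inl j \<Rightarrow> G $ i $ j | Inr j \<Rightarrow> H $ i $ j)"
  have "(F ** transpose F) $ i $ j = (S + T) $ i $ j" for i j
  proof -
    have "(F ** transpose F) $ i $ j = (\<Sum>k\<in>UNIV <+> UNIV. F $ i $ k * F $ j $ k)"
      by (simp add: matrix_matrix_mult_def transpose_def)
    also have "\<dots> = (\<Sum>k\<in>UNIV. G $ i $ k * G $ j $ k) + (\<Sum>k\<in>UNIV. H $ i $ k * H $ j $ k)"
      by (subst sum.Plus) (auto simp: F_def)
    also have "\<dots> = (S + T) $ i $ j"
      by (simp add: S T matrix_matrix_mult_def transpose_def)
    finally show ?thesis .
  qed
  then have "F ** transpose F = S + T"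
    by (simp add: vec_eq_iff)
  then show ?thesis
    using is_gram_gram[of F] by simp
qed

lemma is_gram_scaleR:
  fixes S :: "real^'n^'n"
  assumes "is_gram S" and "0 \<le> c"
  shows "is_gram (c *\<^sub>R S)"
proof -
  obtain G :: "real^'n^'n" where "G ** transpose G = S"
    using assms unfolding is_gram_def by blast
  then have "(sqrt c *\<^sub>R G) ** transpose (sqrt c *\<^sub>R G) = c *\<^sub>R S"
    using \<open>0 \<le> c\<close> by (simp add: transpose_scalar matrix_scalar_ac scalar_matrix_assoc[symmetric])
  then show ?thesis
    unfolding is_gram_def by blast
qed

lemma is_gram_conj:
  fixes S :: "real^'n^'n" and M :: "real^'n^'m"
  assumes "is_gram S"
  shows "is_gram (M ** S ** transpose M)"
proof -
  obtain G :: "real^'n^'n" where S: "S = G ** transpose G"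
    using assms unfolding is_gram_def by metis
  have "(M ** G) ** transpose (M ** G) = M ** S ** transpose M"
    unfolding S by (simp add: matrix_transpose_mul matrix_mul_assoc)
  then show ?thesis
    using is_gram_gram[of "M ** G"] by simp
qed

lemma is_gram_sigma_cov:
  assumes adj: "is_adjacency A" and "0 \<le> s"
  shows "is_gram (sigma_cov A X s a b l)"
proof (induction l)
  case 0
  have "is_gram (A_hat A ** (X ** transpose X) ** transpose (A_hat A))"
    by (intro is_gram_conj is_gram_gram)
  then show ?case
    by (simp add: is_gram_scaleR symmetric_A_hat[OF adj] matrix_mul_assoc)
next
  case (Suc l)
  then show ?case
    using is_gram_conj[OF Suc, of "A_hat A"] \<open>0 \<le> s\<close>
    by (simp add: is_gram_add is_gram_scaleR symmetric_A_hat[OF adj])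
qed

lemma quadratic_le_trace_mat:
  fixes S :: "real^'n^'n"
  assumes "is_gram S" and "norm v = 1"
  shows "v \<bullet> (S *v v) \<le> trace_mat S"
  using assms quadratic_gram_le_frob_sq[OF \<open>norm v = 1\<close>] trace_mat_gram
  unfolding is_gram_def by metis

lemma inner_fixed_A_hat:
  assumes "is_adjacency A" and "A_hat A *v v = v"
  shows "v \<bullet> (A_hat A *v w) = v \<bullet> w"
  using inner_symmetric_matrix_vector[OF symmetric_A_hat[OF assms(1)], of v w] assms(2) by simp

lemma quadratic_sigma_cov_fixed:
  fixes X :: "real^'d^'n"
  assumes adj: "is_adjacency A" and v: "A_hat A *v v = v"
  shows "v \<bullet> (sigma_cov A X s a b l *v v)
    = (a\<^sup>2 * s + b\<^sup>2) ^ l * (s\<^sup>2 / real CARD('d) * ((transpose X *v v) \<bullet> (transpose X *v v)))"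
proof (induction l)
  case 0
  then show ?case
    by (simp add: matrix_vector_mul_assoc[symmetric] scaleR_matrix_vector_assoc[symmetric] v
        inner_fixed_A_hat[OF adj v] inner_matrix_vector_transpose[of v X])
next
  case (Suc l)
  then show ?case
    by (simp add: scaleR_matrix_vector_assoc[symmetric] matrix_vector_mul_assoc[symmetric] v
        inner_fixed_A_hat[OF adj v] algebra_simps)
qed

lemma frob_sq_matrix_mult_le:
  fixes M :: "real^'n^'n" and Y :: "real^'m^'n"
  assumes "\<And>j. column j Y \<in> P" and "\<And>x. x \<in> P \<Longrightarrow> norm (M *v x) \<le> \<theta> * norm x" and "0 \<le> \<theta>"
  shows "frob_sq (M ** Y) \<le> \<theta>\<^sup>2 * frob_sq Y"
proof -
  have "frob_sq (M ** Y) = (\<Sum>j\<in>UNIV. (norm (M *v column j Y))\<^sup>2)"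
    by (simp add: frob_sq_columns column_matrix_mult dot_square_norm)
  also have "\<dots> \<le> (\<Sum>j\<in>UNIV. (\<theta> * norm (column j Y))\<^sup>2)"
    using assms by (intro sum_mono power_mono) auto
  also have "\<dots> = \<theta>\<^sup>2 * frob_sq Y"
    by (simp add: frob_sq_columns dot_square_norm sum_distrib_left power_mult_distrib)
  finally show ?thesis .
qed

lemma trace_conj_gram:
  fixes K G :: "real^'n^'n"
  shows "trace_mat (K ** (G ** transpose G) ** transpose K) = frob_sq (K ** G)"
proof -
  have "K ** (G ** transpose G) ** transpose K = (K ** G) ** transpose (K ** G)"
    by (simp add: matrix_transpose_mul matrix_mul_assoc)
  then show ?thesis
    by (simp add: trace_mat_gram)
qed

lemma trace_conj_linear:
  fixes K S T :: "real^'n^'n"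
  shows "trace_mat (K ** (c *\<^sub>R S + d *\<^sub>R T) ** transpose K)
    = c * trace_mat (K ** S ** transpose K) + d * trace_mat (K ** T ** transpose K)"
proof -
  have entries: "trace_mat (K ** R ** transpose K) = (\<Sum>i\<in>UNIV. \<Sum>k\<in>UNIV. \<Sum>j\<in>UNIV. K $ i $ j * R $ j $ k * K $ i $ k)"
    for R :: "real^'n^'n"
    by (simp add: trace_mat_def matrix_matrix_mult_def transpose_def sum_distrib_right)
  show ?thesis
    unfolding entries by (simp add: algebra_simps sum.distrib sum_distrib_left)
qed

lemma trace_conj_A_hat_le:
  fixes K S :: "real^'n^'n"
  assumes adj: "is_adjacency A" and "is_gram S" and comm: "K ** A_hat A = A_hat A ** K"
    and range_K: "\<And>x. K *v x \<in> P" and gap: "\<And>x. x \<in> P \<Longrightarrow> norm (A_hat A *v x) \<le> \<theta> * norm x"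
    and "0 \<le> \<theta>"
  shows "trace_mat (K ** (A_hat A ** S ** A_hat A) ** transpose K) \<le> \<theta>\<^sup>2 * trace_mat (K ** S ** transpose K)"
proof -
  obtain G :: "real^'n^'n" where S: "S = G ** transpose G"
    using \<open>is_gram S\<close> unfolding is_gram_def by metis
  have "A_hat A ** S ** A_hat A = (A_hat A ** G) ** transpose (A_hat A ** G)"
    by (simp add: S matrix_transpose_mul matrix_mul_assoc symmetric_A_hat[OF adj])
  then have "trace_mat (K ** (A_hat A ** S ** A_hat A) ** transpose K) = frob_sq (K ** (A_hat A ** G))"
    by (simp only: trace_conj_gram)
  also have "\<dots> = frob_sq (A_hat A ** (K ** G))"
    by (simp add: matrix_mul_assoc comm)
  also have "\<dots> \<le> \<theta>\<^sup>2 * frob_sq (K ** G)"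
    by (rule frob_sq_matrix_mult_le[where P = P]) (simp_all add: column_matrix_mult range_K gap \<open>0 \<le> \<theta>\<close>)
  also have "\<dots> = \<theta>\<^sup>2 * trace_mat (K ** S ** transpose K)"
    by (simp add: S trace_conj_gram)
  finally show ?thesis .
qed

lemma trace_conj_sigma_cov_le:
  fixes K :: "real^'n^'n" and X :: "real^'d^'n"
  assumes adj: "is_adjacency A" and "0 \<le> s" and comm: "K ** A_hat A = A_hat A ** K"
    and range_K: "\<And>x. K *v x \<in> P" and gap: "\<And>x. x \<in> P \<Longrightarrow> norm (A_hat A *v x) \<le> \<theta> * norm x"
    and "0 \<le> \<theta>"
  shows "trace_mat (K ** sigma_cov A X s a b l ** transpose K)
    \<le> (a\<^sup>2 * s * \<theta>\<^sup>2 + b\<^sup>2) ^ l * trace_mat (K ** sigma_cov A X s a b 0 ** transpose K)"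
proof (induction l)
  case (Suc l)
  let ?q = "\<lambda>l. trace_mat (K ** sigma_cov A X s a b l ** transpose K)"
  have "0 \<le> a\<^sup>2 * s"
    using \<open>0 \<le> s\<close> by simp
  then have "?q (Suc l) \<le> a\<^sup>2 * s * (\<theta>\<^sup>2 * ?q l) + b\<^sup>2 * ?q l"
    using mult_left_mono[OF trace_conj_A_hat_le[OF adj is_gram_sigma_cov[OF adj \<open>0 \<le> s\<close>]
        comm range_K gap \<open>0 \<le> \<theta>\<close>]]
    by (simp add: trace_conj_linear)
  also have "\<dots> = (a\<^sup>2 * s * \<theta>\<^sup>2 + b\<^sup>2) * ?q l"
    by (simp add: algebra_simps)
  also have "\<dots> \<le> (a\<^sup>2 * s * \<theta>\<^sup>2 + b\<^sup>2) * ((a\<^sup>2 * s * \<theta>\<^sup>2 + b\<^sup>2) ^ l * ?q 0)"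
    using Suc.IH \<open>0 \<le> s\<close> by (intro mult_left_mono) auto
  finally show ?case
    by simp
qed simp

section \<open>Gaussian matrices\<close>

abbreviation std_normal :: "real measure" where
  "std_normal \<equiv> density lborel (\<lambda>x. ennreal (std_normal_density x))"

lemma prob_space_std_normal: "prob_space std_normal"
  by standard (simp add: emeasure_density nn_integral_eq_integral)

lemma product_prob_space_std_normal: "product_prob_space (\<lambda>_. std_normal)"
  unfolding product_prob_space_def product_prob_space_axioms_def product_sigma_finite_def
  using prob_space_std_normal prob_space_imp_sigma_finite by blast

lemma prob_space_std_gauss_mat: "prob_space std_gauss_mat"
  unfolding std_gauss_mat_def by (intro prob_space_PiM prob_space_std_normal)

lemma measurable_std_gauss_mat_coord: "(\<lambda>z. z q) \<in> measurable std_gauss_mat std_normal"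
  unfolding std_gauss_mat_def by (rule measurable_component_singleton) simp

lemma borel_measurable_std_gauss_mat_coord[measurable]: "(\<lambda>z. z q) \<in> borel_measurable std_gauss_mat"
  using measurable_std_gauss_mat_coord measurable_cong_sets[OF refl trans[OF sets_density sets_lborel]] by blast

lemma distr_std_gauss_mat_coord: "distr std_gauss_mat std_normal (\<lambda>z. z q) = std_normal"
proof -
  interpret product_prob_space "\<lambda>_. std_normal" UNIV
    by (rule product_prob_space_std_normal)
  show ?thesis
    unfolding std_gauss_mat_def by (rule PiM_component) simp
qed

lemma distributed_std_gauss_mat_coord:
  "distributed std_gauss_mat lborel (\<lambda>z. z q) (\<lambda>x. ennreal (std_normal_density x))"
proof -
  have "distr std_gauss_mat lborel (\<lambda>z. z q) = distr std_gauss_mat std_normal (\<lambda>z. z q)"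
    by (rule distr_cong) auto
  then show ?thesis
    unfolding distributed_def by (simp add: distr_std_gauss_mat_coord)
qed

lemma indep_vars_std_gauss_mat_column:
  fixes g :: "real^'n" and k :: "'c::finite"
  shows "prob_space.indep_vars (std_gauss_mat :: ('n \<times> 'c \<Rightarrow> real) measure) (\<lambda>_. borel)
          (\<lambda>p z. g $ p * z (p, k)) UNIV"
proof -
  let ?M = "std_gauss_mat :: ('n \<times> 'c \<Rightarrow> real) measure"
  interpret M: prob_space ?M by (rule prob_space_std_gauss_mat)
  have rv: "(\<lambda>z. z (p, k)) \<in> measurable ?M std_normal" for p :: 'n by (rule measurable_std_gauss_mat_coord)
  have "distr ?M (\<Pi>\<^sub>M p\<in>(UNIV::'n set). std_normal) (\<lambda>x. \<lambda>p\<in>UNIV. x (p, k)) = (\<Pi>\<^sub>M p\<in>(UNIV::'n set). std_normal)"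
    unfolding std_gauss_mat_def
    using product_prob_space.distr_reorder[OF product_prob_space_std_normal, of "\<lambda>p::'n. (p, k)" UNIV UNIV]
    by (simp add: inj_on_def)
  also have "\<dots> = (\<Pi>\<^sub>M p\<in>(UNIV::'n set). distr ?M std_normal (\<lambda>z. z (p, k)))"
    by (simp add: distr_std_gauss_mat_coord)
  finally have "M.indep_vars (\<lambda>_. std_normal) (\<lambda>p z. z (p, k)) (UNIV :: 'n set)"
    by (subst M.indep_vars_iff_distr_eq_PiM[OF _ rv]) auto
  then show ?thesis
    by (rule M.indep_vars_compose2) (simp add: measurable_cong_sets[OF trans[OF sets_density sets_lborel] refl])
qed

lemma distributed_std_gauss_mat_linear_form:
  fixes g :: "real^'n" and k :: "'c::finite"
  assumes g: "g \<noteq> 0"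
  shows "distributed (std_gauss_mat :: ('n \<times> 'c \<Rightarrow> real) measure) lborel
           (\<lambda>z. \<Sum>p\<in>UNIV. g $ p * z (p, k)) (\<lambda>x. ennreal (normal_density 0 (norm g) x))"
proof -
  let ?M = "std_gauss_mat :: ('n \<times> 'c \<Rightarrow> real) measure"
  interpret M: prob_space ?M by (rule prob_space_std_gauss_mat)
  define I where "I = {p. g $ p \<noteq> 0}"
  have fin: "finite I" by simp
  have ne: "I \<noteq> {}" using g unfolding I_def by (auto simp: vec_eq_iff)
  have ind: "M.indep_vars (\<lambda>_. borel) (\<lambda>p z. g $ p * z (p, k)) I"
    using M.indep_vars_subset[OF indep_vars_std_gauss_mat_column[of g k]] by simp
  have pos: "\<And>p. p \<in> I \<Longrightarrow> 0 < \<bar>g $ p\<bar>" unfolding I_def by simp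
  have nd: "distributed ?M lborel (\<lambda>z. g $ p * z (p, k)) (\<lambda>x. ennreal (normal_density 0 \<bar>g $ p\<bar> x))"
    if "p \<in> I" for p
    using M.normal_density_affine[OF distributed_std_gauss_mat_coord[of "(p, k)"], of "g $ p" 0] that
    unfolding I_def by simp
  have D: "distributed ?M lborel (\<lambda>z. \<Sum>p\<in>I. g $ p * z (p, k))
      (\<lambda>x. ennreal (normal_density (\<Sum>p\<in>I. 0) (sqrt (\<Sum>p\<in>I. \<bar>g $ p\<bar>\<^sup>2)) x))"
    by (rule M.sum_indep_normal[OF fin ne ind pos nd])
  have e1: "(\<lambda>z. \<Sum>p\<in>I. g $ p * z (p, k)) = (\<lambda>z. \<Sum>p\<in>UNIV. g $ p * z (p, k))"
    by (rule ext, rule sum.mono_neutral_left) (auto simp: I_def)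
  have "(\<Sum>p\<in>I. \<bar>g $ p\<bar>\<^sup>2) = (\<Sum>p\<in>I. (g $ p)\<^sup>2)" by simp
  also have "\<dots> = (\<Sum>p\<in>UNIV. (g $ p)\<^sup>2)"
    by (rule sum.mono_neutral_left) (auto simp: I_def)
  finally have "(\<Sum>p\<in>I. \<bar>g $ p\<bar>\<^sup>2) = (\<Sum>p\<in>UNIV. (g $ p)\<^sup>2)" .
  then have e2: "sqrt (\<Sum>p\<in>I. \<bar>g $ p\<bar>\<^sup>2) = norm g"
    by (simp add: norm_vec_def L2_set_def)
  show ?thesis using D unfolding e1 e2 by simp
qed

lemma integral_linear_form_square:
  fixes g :: "real^'n" and k :: "'c::finite"
  shows "integrable (std_gauss_mat :: ('n \<times> 'c \<Rightarrow> real) measure) (\<lambda>z. (\<Sum>p\<in>UNIV. g $ p * z (p, k))\<^sup>2)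
    \<and> (\<integral>z. (\<Sum>p\<in>UNIV. g $ p * z (p, k))\<^sup>2 \<partial>(std_gauss_mat :: ('n \<times> 'c \<Rightarrow> real) measure)) = g \<bullet> g"
proof (cases "g = 0")
  case True
  then show ?thesis by simp
next
  case False
  let ?M = "std_gauss_mat :: ('n \<times> 'c \<Rightarrow> real) measure"
  let ?X = "\<lambda>z. \<Sum>p\<in>UNIV. g $ p * z (p, k)"
  interpret M: prob_space ?M by (rule prob_space_std_gauss_mat)
  have D: "distributed ?M lborel ?X (\<lambda>x. ennreal (normal_density 0 (norm g) x))"
    by (rule distributed_std_gauss_mat_linear_form[OF False])
  have sp: "0 < norm g" using False by simp
  have int: "integrable ?M (\<lambda>z. (?X z)\<^sup>2)"
    using distributed_integrable[OF D, of "\<lambda>x. x\<^sup>2"] integrable_normal_moment[OF sp, of 0 2]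
    by simp
  have ex: "M.expectation ?X = 0" by (rule M.normal_distributed_expectation[OF sp D])
  have "M.variance ?X = (norm g)\<^sup>2" by (rule M.normal_distributed_variance[OF sp D])
  then have "(\<integral>z. (?X z)\<^sup>2 \<partial>?M) = (norm g)\<^sup>2" using ex by simp
  then show ?thesis using int by (simp add: dot_square_norm)
qed

lemma normal_density_le: "0 < \<sigma> \<Longrightarrow> normal_density 0 \<sigma> x \<le> 1 / \<sigma>"
proof -
  assume sp: "0 < \<sigma>"
  have "exp (-(x - 0)\<^sup>2 / (2 * \<sigma>\<^sup>2)) \<le> 1" by simp
  moreover have "\<sigma> \<le> sqrt (2 * pi * \<sigma>\<^sup>2)"
  proof -
    have "\<sigma>\<^sup>2 \<le> 2 * pi * \<sigma>\<^sup>2" using pi_gt3 by (simp add: mult_le_cancel_right1)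
    then have "sqrt (\<sigma>\<^sup>2) \<le> sqrt (2 * pi * \<sigma>\<^sup>2)" by (rule real_sqrt_le_mono)
    then show ?thesis using sp by simp
  qed
  ultimately have "1 / sqrt (2 * pi * \<sigma>\<^sup>2) * exp (-(x - 0)\<^sup>2 / (2 * \<sigma>\<^sup>2)) \<le> 1 / \<sigma> * 1"
    using sp by (intro mult_mono) (auto simp: frac_le)
  then show ?thesis by (simp add: normal_density_def)
qed

lemma measure_linear_form_less:
  fixes g :: "real^'n" and k :: "'c::finite"
  assumes g: "g \<noteq> 0" and t: "0 \<le> t"
  shows "measure (std_gauss_mat :: ('n \<times> 'c \<Rightarrow> real) measure)
     {z \<in> space std_gauss_mat. \<bar>\<Sum>p\<in>UNIV. g $ p * z (p, k)\<bar> < t} \<le> 2 * t / norm g"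
proof -
  let ?M = "std_gauss_mat :: ('n \<times> 'c \<Rightarrow> real) measure"
  let ?X = "\<lambda>z. \<Sum>p\<in>UNIV. g $ p * z (p, k)"
  interpret M: prob_space ?M by (rule prob_space_std_gauss_mat)
  have D: "distributed ?M lborel ?X (\<lambda>x. ennreal (normal_density 0 (norm g) x))"
    by (rule distributed_std_gauss_mat_linear_form[OF g])
  have sp: "0 < norm g" using g by simp
  have set: "{z \<in> space ?M. \<bar>?X z\<bar> < t} = ?X -` {-t<..<t} \<inter> space ?M" by auto
  have "emeasure ?M {z \<in> space ?M. \<bar>?X z\<bar> < t} =
      (\<integral>\<^sup>+x. ennreal (normal_density 0 (norm g) x) * indicator {-t<..<t} x \<partial>lborel)"
    unfolding set by (rule distributed_emeasure[OF D]) simp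
  also have "\<dots> \<le> (\<integral>\<^sup>+x. ennreal (1 / norm g) * indicator {-t<..<t} x \<partial>lborel)"
    by (intro nn_integral_mono mult_right_mono) (auto simp: normal_density_le[OF sp])
  also have "\<dots> = ennreal (1 / norm g) * emeasure lborel {-t<..<t}"
    by (rule nn_integral_cmult_indicator) simp
  also have "\<dots> = ennreal (2 * t / norm g)"
    using t by (simp add: ennreal_mult'[symmetric])
  finally have "emeasure ?M {z \<in> space ?M. \<bar>?X z\<bar> < t} \<le> ennreal (2 * t / norm g)" .
  then show ?thesis
    using t sp by (simp add: M.emeasure_eq_measure)
qed

lemma to_mat_mult_entry: "((F :: real^'n^'m) ** to_mat z) $ i $ k = (\<Sum>p\<in>UNIV. F $ i $ p * z (p, k))"
  by (simp add: matrix_matrix_mult_def to_mat_def)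

lemma integral_frob_sq_mult_to_mat:
  fixes F :: "real^'n^'m"
  shows "integrable (std_gauss_mat :: (('n \<times> 'c::finite) \<Rightarrow> real) measure) (\<lambda>z. frob_sq (F ** to_mat z))
    \<and> (\<integral>z. frob_sq (F ** to_mat z) \<partial>(std_gauss_mat :: ('n \<times> 'c \<Rightarrow> real) measure)) = real CARD('c) * frob_sq F"
proof -
  let ?M = "std_gauss_mat :: ('n \<times> 'c \<Rightarrow> real) measure"
  have fe: "frob_sq (F ** to_mat z) = (\<Sum>i\<in>UNIV. \<Sum>k\<in>(UNIV::'c set). (\<Sum>p\<in>UNIV. F $ i $ p * z (p, k))\<^sup>2)" for z
    unfolding frob_sq_def to_mat_mult_entry by simp
  have I: "integrable ?M (\<lambda>z. (\<Sum>p\<in>UNIV. F $ i $ p * z (p, k))\<^sup>2)" for i k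
    using integral_linear_form_square[of "F $ i" k] by blast
  have V: "(\<integral>z. (\<Sum>p\<in>UNIV. F $ i $ p * z (p, k))\<^sup>2 \<partial>?M) = F $ i \<bullet> F $ i" for i k
    using integral_linear_form_square[of "F $ i" k] by blast
  have "integrable ?M (\<lambda>z. \<Sum>i\<in>UNIV. \<Sum>k\<in>(UNIV::'c set). (\<Sum>p\<in>UNIV. F $ i $ p * z (p, k))\<^sup>2)"
    by (rule Bochner_Integration.integrable_sum, rule Bochner_Integration.integrable_sum, rule I)
  moreover have "(\<integral>z. (\<Sum>i\<in>UNIV. \<Sum>k\<in>(UNIV::'c set). (\<Sum>p\<in>UNIV. F $ i $ p * z (p, k))\<^sup>2) \<partial>?M)
      = (\<Sum>i\<in>UNIV. \<Sum>k\<in>(UNIV::'c set). F $ i \<bullet> F $ i)"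
    using I V by (simp add: Bochner_Integration.integral_sum)
  moreover have "(\<Sum>i\<in>UNIV. \<Sum>k\<in>(UNIV::'c set). F $ i \<bullet> F $ i) = real CARD('c) * frob_sq F"
    by (simp add: frob_sq_rows sum_distrib_left)
  ultimately show ?thesis unfolding fe by simp
qed

lemma dirichlet_entries:
  "dirichlet A H = (\<Sum>k\<in>UNIV. \<Sum>i\<in>UNIV. (\<Sum>j\<in>UNIV. H $ j $ k * L_hat A $ j $ i) * H $ i $ k)"
  by (simp add: dirichlet_def trace_mat_def matrix_matrix_mult_def transpose_def)

lemma borel_measurable_dirichlet_ratio[measurable]:
  "(\<lambda>z. dirichlet A (G ** to_mat z) / frob_sq (G ** to_mat z))
     \<in> borel_measurable (std_gauss_mat :: ('n::finite \<times> 'c::finite \<Rightarrow> real) measure)"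
  unfolding dirichlet_entries frob_sq_def to_mat_mult_entry by measurable

definition gram_factor :: "real^'n^'n \<Rightarrow> real^'n^'n" where
  "gram_factor S = (SOME G. G ** transpose G = S)"

lemma gram_factor: "is_gram S \<Longrightarrow> gram_factor S ** transpose (gram_factor S) = S"
  unfolding gram_factor_def is_gram_def by (rule someI_ex)

lemma gauss_expect_gram_factor:
  "gauss_expect S f = (\<integral>z. f (gram_factor S ** to_mat z) \<partial>std_gauss_mat)"
  unfolding gauss_expect_def gram_factor_def Let_def ..

lemma gauss_expect_frob_sq:
  fixes S :: "real^'n^'n"
  assumes "is_gram S"
  shows "gauss_expect S (\<lambda>H :: real^'c^'n. frob_sq H / c) = real CARD('c) * trace_mat S / c"
proof -
  have "trace_mat S = frob_sq (gram_factor S)"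
    using trace_mat_gram[of "gram_factor S"] by (simp add: gram_factor[OF assms])
  then show ?thesis
    using integral_frob_sq_mult_to_mat[of "gram_factor S", where 'c = 'c]
    by (simp add: gauss_expect_gram_factor)
qed

lemma inner_column_mult_to_mat:
  fixes G :: "real^'n^'m"
  shows "v \<bullet> column k (G ** to_mat z) = (\<Sum>p\<in>UNIV. (transpose G *v v) $ p * z (p, k))"
proof -
  have "v \<bullet> column k (G ** to_mat z) = (transpose G *v v) \<bullet> column k (to_mat z)"
    by (simp only: column_matrix_mult inner_matrix_vector_transpose)
  then show ?thesis
    by (simp add: inner_vec_def column_def to_mat_def)
qed

lemma dirichlet_ratio_bounds:
  assumes "is_adjacency A"
  shows "0 \<le> dirichlet A H / frob_sq H" and "dirichlet A H / frob_sq H \<le> 2"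
  using dirichlet_nonneg[OF assms, of H] dirichlet_le_frob_sq[OF assms, of H] frob_sq_nonneg[of H]
  by (auto simp: divide_le_eq)

text \<open>Away from the event that the column \<open>k\<close> of \<open>H\<close> is almost orthogonal to \<open>v\<close>, the energy
  \<open>\<parallel>H\<parallel>\<^sup>2\<close> is at least \<open>t\<^sup>2\<close>, while the Dirichlet energy only sees the projection \<open>K H\<close>.\<close>
lemma dirichlet_ratio_le:
  assumes adj: "is_adjacency A" and fixed_diff_K: "\<And>x. x - K *v x \<in> fixed_space (A_hat A)"
    and "norm v = 1" and "0 < t"
  shows "dirichlet A H / frob_sq H
    \<le> 2 * indicator {H. \<bar>v \<bullet> column k H\<bar> < t} H + 2 * frob_sq (K ** H) / t\<^sup>2"
proof (cases "\<bar>v \<bullet> column k H\<bar> < t")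
  case True
  have "dirichlet A H / frob_sq H \<le> 2"
    by (rule dirichlet_ratio_bounds(2)[OF adj])
  moreover have "0 \<le> 2 * frob_sq (K ** H) / t\<^sup>2"
    by (simp add: frob_sq_nonneg)
  ultimately show ?thesis
    using True by simp
next
  case False
  then have "\<bar>t\<bar> \<le> \<bar>v \<bullet> column k H\<bar>"
    using \<open>0 < t\<close> by simp
  then have "t\<^sup>2 \<le> (v \<bullet> column k H)\<^sup>2"
    by (simp only: abs_le_square_iff)
  also have "\<dots> \<le> frob_sq H"
    using \<open>norm v = 1\<close> by (rule inner_column_square_le_frob_sq)
  finally have "t\<^sup>2 \<le> frob_sq H" .
  moreover have "0 < t\<^sup>2"
    using \<open>0 < t\<close> by simp
  ultimately have "0 < frob_sq H"
    by linarith
  then have "dirichlet A H / frob_sq H \<le> dirichlet A H / t\<^sup>2"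
    using dirichlet_nonneg[OF adj, of H] \<open>t\<^sup>2 \<le> frob_sq H\<close> \<open>0 < t\<close>
    by (intro divide_left_mono) auto
  also have "\<dots> \<le> 2 * frob_sq (K ** H) / t\<^sup>2"
    using dirichlet_le_projection[OF adj fixed_diff_K] by (intro divide_right_mono) auto
  finally show ?thesis
    using False by simp
qed

text \<open>Integrating the bound above with \<open>t\<^sup>2 = \<delta> v\<^sup>T S v\<close>: the projection of a column of \<open>H\<close>
  onto \<open>v\<close> is centred Gaussian with variance \<open>v\<^sup>T S v\<close>, so the small-ball event has probability
  at most \<open>2 \<surd>\<delta>\<close>.\<close>
lemma gauss_expect_dirichlet_ratio_le:
  fixes S K :: "real^'n^'n"
  assumes adj: "is_adjacency A" and "is_gram S" and fixed_diff_K: "\<And>x. x - K *v x \<in> fixed_space (A_hat A)"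
    and "norm v = 1" and m_pos: "0 < v \<bullet> (S *v v)" and "0 < \<delta>"
  shows "gauss_expect S (\<lambda>H :: real^'c^'n. dirichlet A H / frob_sq H)
    \<le> 4 * sqrt \<delta> + 2 * real CARD('c) * trace_mat (K ** S ** transpose K) / (\<delta> * (v \<bullet> (S *v v)))"
proof -
  let ?M = "std_gauss_mat :: ('n \<times> 'c \<Rightarrow> real) measure"
  interpret M: prob_space ?M
    by (rule prob_space_std_gauss_mat)
  define G where "G = gram_factor S"
  have G: "G ** transpose G = S"
    unfolding G_def by (rule gram_factor[OF \<open>is_gram S\<close>])
  define m where "m = v \<bullet> (S *v v)"
  define t where "t = sqrt (\<delta> * m)"
  define k :: 'c where "k = undefined" \<comment> \<open>any column will do\<close>
  define B where "B = {z \<in> space ?M. \<bar>v \<bullet> column k (G ** to_mat z)\<bar> < t}"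
  have "0 < m" and "0 < t"
    using m_pos \<open>0 < \<delta>\<close> by (simp_all add: m_def t_def)
  have m: "m = (transpose G *v v) \<bullet> (transpose G *v v)"
    by (simp add: m_def G[symmetric] quadratic_gram)
  have "B \<in> sets ?M"
    unfolding B_def inner_column_mult_to_mat by measurable
  have int_B: "integrable ?M (indicator B :: _ \<Rightarrow> real)"
    using \<open>B \<in> sets ?M\<close> by (intro integrable_real_indicator) (auto simp: less_top[symmetric])
  have int_KG: "integrable ?M (\<lambda>z. frob_sq ((K ** G) ** to_mat z))"
    using integral_frob_sq_mult_to_mat[of "K ** G", where 'c = 'c] by blast
  have "norm (dirichlet A H / frob_sq H) \<le> 2" for H :: "real^'c^'n"
    using dirichlet_ratio_bounds[OF adj, of H] by (metis abs_of_nonneg real_norm_def)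
  then have int_ratio: "integrable ?M (\<lambda>z. dirichlet A (G ** to_mat z) / frob_sq (G ** to_mat z))"
    by (intro M.integrable_const_bound[where B = 2] borel_measurable_dirichlet_ratio) auto
  have "measure ?M B \<le> 2 * t / norm (transpose G *v v)"
    unfolding B_def inner_column_mult_to_mat
    using \<open>0 < m\<close> \<open>0 < t\<close> by (intro measure_linear_form_less) (auto simp: m)
  also have "\<dots> = 2 * sqrt \<delta>"
    using \<open>0 < m\<close> by (simp add: t_def m norm_eq_sqrt_inner real_sqrt_mult)
  finally have small: "measure ?M B \<le> 2 * sqrt \<delta>" .
  have "gauss_expect S (\<lambda>H :: real^'c^'n. dirichlet A H / frob_sq H)
      \<le> (\<integral>z. 2 * indicator B z + 2 * frob_sq ((K ** G) ** to_mat z) / t\<^sup>2 \<partial>?M)"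
    unfolding gauss_expect_gram_factor G_def[symmetric]
  proof (rule integral_mono[OF int_ratio])
    show "integrable ?M (\<lambda>z. 2 * indicator B z + 2 * frob_sq ((K ** G) ** to_mat z) / t\<^sup>2)"
      using int_B int_KG by auto
    show "dirichlet A (G ** to_mat z) / frob_sq (G ** to_mat z)
        \<le> 2 * indicator B z + 2 * frob_sq ((K ** G) ** to_mat z) / t\<^sup>2" if "z \<in> space ?M" for z
      using dirichlet_ratio_le[OF adj fixed_diff_K \<open>norm v = 1\<close> \<open>0 < t\<close>, of "G ** to_mat z" k] that
      by (simp add: B_def indicator_def matrix_mul_assoc)
  qed
  also have "\<dots> = 2 * measure ?M B + 2 * (real CARD('c) * frob_sq (K ** G)) / t\<^sup>2"
    using int_B int_KG \<open>B \<in> sets ?M\<close> integral_frob_sq_mult_to_mat[of "K ** G", where 'c = 'c]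
    by simp
  also have "\<dots> \<le> 4 * sqrt \<delta> + 2 * real CARD('c) * trace_mat (K ** S ** transpose K) / (\<delta> * m)"
    using small \<open>0 < \<delta>\<close> \<open>0 < m\<close> by (simp add: t_def G[symmetric] trace_conj_gram)
  finally show ?thesis
    unfolding m_def .
qed

lemma LIMSEQ_zero_if_le_eps_plus_null:
  fixes f :: "nat \<Rightarrow> real"
  assumes nonneg: "\<And>n. 0 \<le> f n"
    and bound: "\<And>\<epsilon>. 0 < \<epsilon> \<Longrightarrow> \<exists>g. g \<longlonglongrightarrow> 0 \<and> (\<forall>n. f n \<le> \<epsilon> + g n)"
  shows "f \<longlonglongrightarrow> 0"
proof (rule LIMSEQ_I)
  fix r :: real
  assume "0 < r"
  then obtain g where "g \<longlonglongrightarrow> 0" and le: "\<And>n. f n \<le> r / 2 + g n"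
    using bound[of "r / 2"] by auto
  then obtain N where "\<And>n. N \<le> n \<Longrightarrow> norm (g n - 0) < r / 2"
    using LIMSEQ_D[of g 0 "r / 2"] \<open>0 < r\<close> by auto
  then have "norm (f n - 0) < r" if "N \<le> n" for n
    using le[of n] nonneg[of n] that by fastforce
  then show "\<exists>N. \<forall>n\<ge>N. norm (f n - 0) < r"
    by blast
qed

lemma unit_fixed_vector:
  fixes X :: "real^'d^'n"
  assumes "A_hat A *v u = u" and "transpose X *v u \<noteq> 0"
  obtains v where "norm v = 1" "A_hat A *v v = v" "transpose X *v v \<noteq> 0"
proof
  define v where "v = (1 / norm u) *\<^sub>R u"
  have "u \<noteq> 0"
    using assms(2) by auto
  then show "norm v = 1" and "A_hat A *v v = v" and "transpose X *v v \<noteq> 0"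
    using assms by (simp_all add: v_def matrix_vector_mult_scaleR)
qed

lemma FSP_tendsto_at_top:
  fixes A :: "real^'n^'n" and X :: "real^'d^'n"
  assumes adj: "is_adjacency A" and "0 < s" and growth: "1 < a\<^sup>2 * s + b\<^sup>2"
    and "A_hat A *v u = u" and "transpose X *v u \<noteq> 0"
  shows "filterlim (\<lambda>L. FSP A X s a b TYPE('c::finite) L) at_top sequentially"
proof -
  obtain v where v: "norm v = 1" "A_hat A *v v = v" and Xv: "transpose X *v v \<noteq> 0"
    using unit_fixed_vector assms(4,5) by blast
  define m0 where "m0 = s\<^sup>2 / real CARD('d) * ((transpose X *v v) \<bullet> (transpose X *v v))"
  define c where "c = real CARD('c) * m0 / frob_sq X"
  have "X \<noteq> 0"
    using Xv by auto
  then have "0 < c"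
    using \<open>0 < s\<close> Xv frob_sq_pos[of X] by (simp add: c_def m0_def)
  have lower: "c * (a\<^sup>2 * s + b\<^sup>2) ^ l \<le> FSP A X s a b TYPE('c) (Suc l)" for l
  proof -
    have "(a\<^sup>2 * s + b\<^sup>2) ^ l * m0 \<le> trace_mat (sigma_cov A X s a b l)"
      using quadratic_le_trace_mat[OF is_gram_sigma_cov[OF adj] v(1), of s X a b l]
        quadratic_sigma_cov_fixed[OF adj v(2), of X s a b l] \<open>0 < s\<close>
      by (simp add: m0_def)
    then show ?thesis
      using frob_sq_pos[OF \<open>X \<noteq> 0\<close>] \<open>0 < s\<close>
      by (simp add: FSP_def Sigma_L_def gauss_expect_frob_sq is_gram_sigma_cov[OF adj] c_def
          divide_right_mono mult_left_mono mult_ac)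
  qed
  have "filterlim (\<lambda>l. norm ((a\<^sup>2 * s + b\<^sup>2) ^ l)) at_top sequentially"
    using growth by (intro filterlim_at_infinity_imp_norm_at_top filterlim_realpow_sequentially_gt1) simp
  then have "filterlim (\<lambda>l. c * (a\<^sup>2 * s + b\<^sup>2) ^ l) at_top sequentially"
    using growth by (intro filterlim_tendsto_pos_mult_at_top[OF tendsto_const \<open>0 < c\<close>]) (simp add: norm_power)
  then have "filterlim (\<lambda>l. FSP A X s a b TYPE('c) (Suc l)) at_top sequentially"
    by (rule filterlim_at_top_mono) (simp add: lower)
  then show ?thesis
    by (simp add: filterlim_sequentially_Suc)
qed

lemma A_hat_spectral_gap_projection:
  fixes A :: "real^'n^'n"
  assumes adj: "is_adjacency A"
  obtains \<theta> and K :: "real^'n^'n"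
  where "0 \<le> \<theta>" and "\<theta> < 1"
    and "\<And>x. x \<in> (fixed_space (A_hat A))\<^sup>\<bottom> \<Longrightarrow> norm (A_hat A *v x) \<le> \<theta> * norm x"
    and "\<And>x. K *v x \<in> (fixed_space (A_hat A))\<^sup>\<bottom>" and "\<And>x. x - K *v x \<in> fixed_space (A_hat A)"
    and "K ** A_hat A = A_hat A ** K"
proof -
  obtain \<theta> where "0 \<le> \<theta>" "\<theta> < 1"
    and "\<And>x. x \<in> (fixed_space (A_hat A))\<^sup>\<bottom> \<Longrightarrow> norm (A_hat A *v x) \<le> \<theta> * norm x"
    using spectral_gap_orthogonal_comp_fixed_space[OF symmetric_A_hat norm_A_hat_le A_hat_neq_uminus]
      adj by metis
  moreover obtain K :: "real^'n^'n" where "\<And>x. K *v x \<in> (fixed_space (A_hat A))\<^sup>\<bottom>"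
    and "\<And>x. x - K *v x \<in> fixed_space (A_hat A)"
    using orthogonal_projection_matrix_exists[OF subspace_fixed_space] by metis
  moreover note orthogonal_projection_fixed_space_commute[OF symmetric_A_hat[OF adj]]
  ultimately show thesis
    using that by metis
qed

lemma GEV_Suc_le:
  fixes A :: "real^'n^'n" and X :: "real^'d^'n"
  assumes adj: "is_adjacency A" and "0 < s" and "a \<noteq> 0"
    and v: "norm v = 1" "A_hat A *v v = v" and Xv: "transpose X *v v \<noteq> 0"
  obtains \<gamma> \<rho> C where "0 \<le> \<gamma>" and "\<gamma> < \<rho>"
    and "\<And>\<delta> l. 0 < \<delta> \<Longrightarrow> GEV A X s a b TYPE('c::finite) (Suc l) \<le> 4 * sqrt \<delta> + C / \<delta> * (\<gamma> / \<rho>) ^ l"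
proof -
  obtain \<theta> K where "0 \<le> \<theta>" "\<theta> < 1"
    and gap: "\<And>x. x \<in> (fixed_space (A_hat A))\<^sup>\<bottom> \<Longrightarrow> norm (A_hat A *v x) \<le> \<theta> * norm x"
    and perp_K: "\<And>x. K *v x \<in> (fixed_space (A_hat A))\<^sup>\<bottom>"
    and fixed_diff_K: "\<And>x. x - K *v x \<in> fixed_space (A_hat A)" and comm: "K ** A_hat A = A_hat A ** K"
    using A_hat_spectral_gap_projection[OF adj] by blast
  define \<rho> where "\<rho> = a\<^sup>2 * s + b\<^sup>2"
  define \<gamma> where "\<gamma> = a\<^sup>2 * s * \<theta>\<^sup>2 + b\<^sup>2"
  define m0 where "m0 = s\<^sup>2 / real CARD('d) * ((transpose X *v v) \<bullet> (transpose X *v v))"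
  define q0 where "q0 = trace_mat (K ** sigma_cov A X s a b 0 ** transpose K)"
  have "0 < a\<^sup>2 * s"
    using \<open>a \<noteq> 0\<close> \<open>0 < s\<close> by simp
  moreover have "\<theta>\<^sup>2 < 1"
    using \<open>0 \<le> \<theta>\<close> \<open>\<theta> < 1\<close> by (simp add: power_less_one_iff)
  ultimately have "0 \<le> \<gamma>" and "\<gamma> < \<rho>" and "0 < \<rho>"
    using mult_strict_left_mono[of "\<theta>\<^sup>2" 1 "a\<^sup>2 * s"] by (simp_all add: \<gamma>_def \<rho>_def add_pos_nonneg)
  have "0 < m0"
    using \<open>0 < s\<close> Xv by (simp add: m0_def)
  have "GEV A X s a b TYPE('c) (Suc l) \<le> 4 * sqrt \<delta> + 2 * real CARD('c) * q0 / m0 / \<delta> * (\<gamma> / \<rho>) ^ l"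
    if "0 < \<delta>" for \<delta> l
  proof -
    let ?S = "sigma_cov A X s a b l"
    have m: "v \<bullet> (?S *v v) = \<rho> ^ l * m0"
      by (simp add: quadratic_sigma_cov_fixed[OF adj v(2)] \<rho>_def m0_def)
    have "trace_mat (K ** ?S ** transpose K) \<le> \<gamma> ^ l * q0"
      unfolding \<gamma>_def q0_def
      by (rule trace_conj_sigma_cov_le[OF adj _ comm perp_K gap \<open>0 \<le> \<theta>\<close>]) (use \<open>0 < s\<close> in simp)
    then have "2 * real CARD('c) * trace_mat (K ** ?S ** transpose K) / (\<delta> * (\<rho> ^ l * m0))
        \<le> 2 * real CARD('c) * (\<gamma> ^ l * q0) / (\<delta> * (\<rho> ^ l * m0))"
      using \<open>0 < \<delta>\<close> \<open>0 < \<rho>\<close> \<open>0 < m0\<close> by (intro divide_right_mono mult_left_mono) auto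
    also have "\<dots> = 2 * real CARD('c) * q0 / m0 / \<delta> * (\<gamma> / \<rho>) ^ l"
      using \<open>0 < \<rho>\<close> by (simp add: field_simps)
    finally show ?thesis
      using gauss_expect_dirichlet_ratio_le[OF adj is_gram_sigma_cov[OF adj] fixed_diff_K v(1),
          of s X a b l \<delta>, where 'c = 'c] \<open>0 < s\<close> \<open>0 < \<delta>\<close> \<open>0 < \<rho>\<close> \<open>0 < m0\<close>
      by (simp add: GEV_def Sigma_L_def m)
  qed
  then show thesis
    using that \<open>0 \<le> \<gamma>\<close> \<open>\<gamma> < \<rho>\<close> by blast
qed

lemma GEV_tendsto_zero:
  fixes A :: "real^'n^'n" and X :: "real^'d^'n"
  assumes adj: "is_adjacency A" and "0 < s" and "a \<noteq> 0"
    and "A_hat A *v u = u" and "transpose X *v u \<noteq> 0"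
  shows "(\<lambda>L. GEV A X s a b TYPE('c::finite) L) \<longlonglongrightarrow> 0"
proof -
  obtain v where "norm v = 1" "A_hat A *v v = v" and "transpose X *v v \<noteq> 0"
    using unit_fixed_vector assms(4,5) by blast
  then obtain \<gamma> \<rho> C where "0 \<le> \<gamma>" and "\<gamma> < \<rho>"
    and bound: "\<And>\<delta> l. 0 < \<delta> \<Longrightarrow> GEV A X s a b TYPE('c) (Suc l) \<le> 4 * sqrt \<delta> + C / \<delta> * (\<gamma> / \<rho>) ^ l"
    using GEV_Suc_le[OF adj \<open>0 < s\<close> \<open>a \<noteq> 0\<close>] by metis
  have "(\<lambda>l. GEV A X s a b TYPE('c) (Suc l)) \<longlonglongrightarrow> 0"
  proof (rule LIMSEQ_zero_if_le_eps_plus_null)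
    show "0 \<le> GEV A X s a b TYPE('c) (Suc l)" for l
      unfolding GEV_def gauss_expect_def Let_def
      by (intro Bochner_Integration.integral_nonneg dirichlet_ratio_bounds(1)[OF adj])
    fix \<epsilon> :: real
    assume "0 < \<epsilon>"
    define \<delta> where "\<delta> = (\<epsilon> / 4)\<^sup>2"
    have "0 < \<delta>" and "4 * sqrt \<delta> = \<epsilon>"
      using \<open>0 < \<epsilon>\<close> by (simp_all add: \<delta>_def)
    moreover have "(\<lambda>l. C / \<delta> * (\<gamma> / \<rho>) ^ l) \<longlonglongrightarrow> 0"
      using \<open>0 \<le> \<gamma>\<close> \<open>\<gamma> < \<rho>\<close> by (intro tendsto_mult_right_zero LIMSEQ_power_zero) simp
    ultimately show "\<exists>g. g \<longlonglongrightarrow> 0 \<and> (\<forall>l. GEV A X s a b TYPE('c) (Suc l) \<le> \<epsilon> + g l)"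
      using bound by metis
  qed
  then show ?thesis
    by (simp add: filterlim_sequentially_Suc)
qed

theorem theorem3:
  fixes A :: "real^'n^'n" and X :: "real^'d^'n" and u :: "real^'n"
    and a b s :: real
  assumes adj: "is_adjacency A"
    and Xnz: "X \<noteq> 0"
    and s_pos: "s > 0"
    and a_nz: "a \<noteq> 0"
    and growth: "a\<^sup>2 * s + b\<^sup>2 > 1"
    and u_nz: "u \<noteq> 0"
    and u_eig: "A_hat A *v u = u"
    and Xu: "transpose X *v u \<noteq> 0"
  shows "filterlim (\<lambda>L. FSP A X s a b TYPE('c::finite) L) at_top sequentially
       \<and> (\<lambda>L. GEV A X s a b TYPE('c::finite) L) \<longlonglongrightarrow> 0"
  using FSP_tendsto_at_top[OF adj s_pos growth u_eig Xu] GEV_tendsto_zero[OF adj s_pos a_nz u_eig Xu]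
  by blast

end
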